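(* Let there be finitely many items with feature vectors $x_i\in\mathbb{R}^d$, a linear weight vector $w\in\mathbb{R}^d$, and a probability distribution $\mathcal{P}$ on pairs $p=(i,j)$ of items. Put $b_p^{(f)}=|x_{if}-x_{jf}|$ and let \[ \mathcal F_*=\{f:\ |w_f|>0\text{ and } \mathbb P_{p\sim\mathcal P}(b_p^{(f)}>0)>0\}. \] Assume $\mathcal P$ is supported on pairs with $\sum_{k\in\mathcal F_*}b_p^{(k)}>0$. For $u=(u_f)_{f\in\mathcal F_*}\in\mathbb{R}^{\mathcal F_*}$ define \[ \rho_p^{(f)}(u)=\frac{e^{u_f}b_p^{(f)}}{\sum_{k\in\mathcal F_*}e^{u_k}b_p^{(k)}},\qquad I_f(u)=\mathbb E_{p\sim\mathcal P}[\rho_p^{(f)}(u)],\qquad I(u)=(I_f(u))_{f\in\mathcal F_*}, \] \[ \Phi(u)=\mathbb E_{p\sim\mathcal P}\Big[\log\Big(\sum_{k\in\mathcal F_*}e^{u_k}b_p^{(k)}\Big)\Big], \] and the factor competition graph $G_{\mathcal P}=(\mathcal F_*,E_{\mathcal P})$ by $\{f,g\}\in E_{\mathcal P}\iff \mathbb P_{p\sim\mathcal P}(b_p^{(f)}b_p^{(g)}>0)>0$ (for $f\ne g$). Then: (1) $I(u)=\nabla\Phi(u)$ for all $u$. (2) The Jacobian $J(u)=\nabla^2\Phi(u)$ equals $\mathbb E_p[\operatorname{Diag}(\rho_p(u))-\rho_p(u)\rho_p(u)^\top]$; in particular for $f\ne g$, $J_{fg}(u)=-\mathbb E[\rho_p^{(f)}(u)\rho_p^{(g)}(u)]\le0$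 and $J_{ff}(u)=\sum_{g\ne f}\mathbb E[\rho_p^{(f)}(u)\rho_p^{(g)}(u)]$. Hence $J(u)$ is a symmetric positive-semidefinite Laplacian-type matrix (nonpositive off-diagonal entries, zero row sums) whose off-diagonal support is contained in $E_{\mathcal P}$. (3) For all $u,u'$, with $\Delta u=u'-u$, \[ \langle\Delta u,I(u')-I(u)\rangle=\int_0^1\Delta u^\top J(u+t\Delta u)\Delta u\,dt\ \ge 0. \] (4) $I(u')=I(u)$ if and only if $\Delta u$ is constant on every connected component of $G_{\mathcal P}$. In particular, if $G_{\mathcal P}$ is connected, then $I(u')=I(u)$ if and only if $u'=u+c\mathbf 1$ for some scalar $c$.
   Context: Interpretation: $u_f=\log|w_f|$ are log-absolute linear weights; $\rho_p^{(f)}(u)$ is then the local influence share $|w_f(x_{if}-x_{jf})|/\sum_k|w_k(x_{ik}-x_{jk})|$, $I(u)$ is the global influence structure, and $I(u')-I(u)$ is Influence Exchange. $\operatorname{Diag}(v)$ is the diagonal matrix with diagonal $v$, and $\mathbf 1$ is the all-ones vector. *)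

theory Defs
  imports "HOL-Probability.Probability"
begin

text \<open>Log-weights u are vectors in real^'d; only the coordinates in F_* matter.\<close>

definition bdiff :: "('i \<Rightarrow> real^'d) \<Rightarrow> 'i \<times> 'i \<Rightarrow> 'd \<Rightarrow> real" where
  "bdiff x p f = \<bar>x (fst p) $ f - x (snd p) $ f\<bar>"

definition Fstar :: "('i \<Rightarrow> real^'d) \<Rightarrow> real^'d \<Rightarrow> ('i \<times> 'i) pmf \<Rightarrow> 'd set" where
  "Fstar x w P = {f. \<bar>w $ f\<bar> > 0 \<and> measure_pmf.prob P {p. bdiff x p f > 0} > 0}"

definition rho :: "('i \<Rightarrow> real^'d) \<Rightarrow> real^'d \<Rightarrow> ('i \<times> 'i) pmf \<Rightarrow> real^'d \<Rightarrow> 'i \<times> 'i \<Rightarrow> 'd \<Rightarrow> real" where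
  "rho x w P u p f = exp (u $ f) * bdiff x p f / (\<Sum>k\<in>Fstar x w P. exp (u $ k) * bdiff x p k)"

definition Infl :: "('i \<Rightarrow> real^'d) \<Rightarrow> real^'d \<Rightarrow> ('i \<times> 'i) pmf \<Rightarrow> real^'d \<Rightarrow> 'd \<Rightarrow> real" where
  "Infl x w P u f = measure_pmf.expectation P (\<lambda>p. rho x w P u p f)"

definition Phi :: "('i \<Rightarrow> real^'d) \<Rightarrow> real^'d \<Rightarrow> ('i \<times> 'i) pmf \<Rightarrow> real^'d \<Rightarrow> real" where
  "Phi x w P u = measure_pmf.expectation P
      (\<lambda>p. ln (\<Sum>k\<in>Fstar x w P. exp (u $ k) * bdiff x p k))"

definition Jac :: "('i \<Rightarrow> real^'d) \<Rightarrow> real^'d \<Rightarrow> ('i \<times> 'i) pmf \<Rightarrow> real^'d \<Rightarrow> 'd \<Rightarrow> 'd \<Rightarrow> real" where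
  "Jac x w P u f g = measure_pmf.expectation P
      (\<lambda>p. (if f = g then rho x w P u p f else 0) - rho x w P u p f * rho x w P u p g)"

definition compete_edge :: "('i \<Rightarrow> real^'d) \<Rightarrow> real^'d \<Rightarrow> ('i \<times> 'i) pmf \<Rightarrow> 'd \<Rightarrow> 'd \<Rightarrow> bool" where
  "compete_edge x w P f g \<longleftrightarrow> f \<in> Fstar x w P \<and> g \<in> Fstar x w P \<and> f \<noteq> g \<and>
      measure_pmf.prob P {p. bdiff x p f * bdiff x p g > 0} > 0"

definition same_comp :: "('i \<Rightarrow> real^'d) \<Rightarrow> real^'d \<Rightarrow> ('i \<times> 'i) pmf \<Rightarrow> 'd \<Rightarrow> 'd \<Rightarrow> bool" where
  "same_comp x w P = (compete_edge x w P)\<^sup>*\<^sup>*"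

end

theory Submission
  imports Defs
begin

(*
  For a single pair p, u \<mapsto> ln (\<Sum>k. exp u_k * b_p k) is a log-sum-exp: its gradient is the
  share vector \<rho>_p(u), and its Hessian Diag \<rho>_p - \<rho>_p \<rho>_p^T is the covariance matrix of a
  factor drawn with law \<rho>_p(u), hence positive semidefinite. Averaging over p gives the gradient
  and Jacobian claims; the integral formula is the fundamental theorem of calculus along the
  segment from u to u'.

  For the characterisation of I(u') = I(u), put D = u' - u and a_k = exp u_k * b_p k. Then
    <D, \<rho>_p(u') - \<rho>_p(u)> = \<Sum>f g. a_f a_g (exp D_f - exp D_g) (D_f - D_g) / (2 Z_p(u) Z_p(u'))
  with Z_p the normaliser, and every term is nonnegative. So I(u') = I(u) forces D_f = D_g
  whenever f and g are both active on a pair of positive probability, i.e. along every edge of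
  the competition graph; conversely, D constant on the support of b_p leaves \<rho>_p unchanged.
*)

definition expsum :: "'d set \<Rightarrow> ('d \<Rightarrow> real) \<Rightarrow> real^'d \<Rightarrow> real" where
  "expsum F b u = (\<Sum>k\<in>F. exp (u $ k) * b k)"

definition exp_share :: "'d set \<Rightarrow> ('d \<Rightarrow> real) \<Rightarrow> real^'d \<Rightarrow> 'd \<Rightarrow> real" where
  "exp_share F b u f = exp (u $ f) * b f / expsum F b u"

lemma expsum_pos:
  assumes "finite F" "\<And>k. 0 \<le> b k" "0 < (\<Sum>k\<in>F. b k)"
  shows "0 < expsum F b u"
proof -
  obtain k where k: "k \<in> F" "0 < b k"
    using assms by (metis not_less sum_nonpos)
  have "exp (u $ k) * b k \<le> expsum F b u"
    unfolding expsum_def by (rule member_le_sum) (use assms k in auto)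
  moreover have "0 < exp (u $ k) * b k"
    using k by simp
  ultimately show ?thesis by linarith
qed

lemma exp_share_nonneg: "(\<And>k. 0 \<le> b k) \<Longrightarrow> 0 \<le> exp_share F b u f"
  unfolding exp_share_def expsum_def by (auto intro!: divide_nonneg_nonneg sum_nonneg)

lemma sum_exp_share:
  assumes "finite F" "\<And>k. 0 \<le> b k" "0 < (\<Sum>k\<in>F. b k)"
  shows "(\<Sum>f\<in>F. exp_share F b u f) = 1"
  using expsum_pos[OF assms, of u]
  unfolding exp_share_def sum_divide_distrib[symmetric] by (simp add: expsum_def)

lemma has_derivative_expsum:
  assumes "finite F"
  shows "(expsum F b has_derivative (\<lambda>h. \<Sum>k\<in>F. exp (u $ k) * b k * h $ k)) (at u)"
  unfolding expsum_def
  by (auto intro!: derivative_eq_intros bounded_linear_imp_has_derivative[OF bounded_linear_vec_nth]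
      simp: assms mult_ac)

lemma has_derivative_ln_expsum:
  assumes "finite F" "\<And>k. 0 \<le> b k" "0 < (\<Sum>k\<in>F. b k)"
  shows "((\<lambda>u. ln (expsum F b u)) has_derivative (\<lambda>h. \<Sum>f\<in>F. exp_share F b u f * h $ f)) (at u)"
  by (rule has_derivative_eq_rhs[OF has_derivative_ln[OF expsum_pos[OF assms]
        has_derivative_expsum[OF assms(1)]]])
    (auto simp: exp_share_def fun_eq_iff divide_inverse[symmetric] sum_divide_distrib)

lemma has_derivative_exp_share:
  assumes "finite F" "\<And>k. 0 \<le> b k" "0 < (\<Sum>k\<in>F. b k)"
  shows "((\<lambda>v. exp_share F b v f) has_derivative
     (\<lambda>h. exp_share F b u f * h $ f - exp_share F b u f * (\<Sum>g\<in>F. exp_share F b u g * h $ g))) (at u)"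
proof -
  have numerator: "((\<lambda>v. exp (v $ f) * b f) has_derivative (\<lambda>h. exp (u $ f) * b f * h $ f)) (at u)"
    by (auto intro!: derivative_eq_intros bounded_linear_imp_has_derivative[OF bounded_linear_vec_nth])
  have nonzero: "expsum F b u \<noteq> 0"
    using expsum_pos[OF assms] by (metis less_irrefl)
  from has_derivative_divide[OF numerator has_derivative_expsum[OF assms(1)] nonzero] show ?thesis
    unfolding exp_share_def[abs_def]
    by (rule has_derivative_eq_rhs)
      (use nonzero in \<open>auto simp: fun_eq_iff sum_distrib_left field_simps power2_eq_square sum_negf\<close>)
qed

lemma sum_delta_minus_product:
  fixes r h :: "'d \<Rightarrow> 'a::comm_ring_1"
  assumes "finite F" "f \<in> F"
  shows "(\<Sum>g\<in>F. ((if f = g then r f else 0) - r f * r g) * h g) = r f * h f - r f * (\<Sum>g\<in>F. r g * h g)"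
proof -
  have "(\<Sum>g\<in>F. ((if f = g then r f else 0) - r f * r g) * h g) =
      (\<Sum>g\<in>F. (if f = g then r f * h g else 0)) - (\<Sum>g\<in>F. r f * (r g * h g))"
    by (simp add: sum_subtractf[symmetric]) (rule sum.cong, auto simp: algebra_simps)
  then show ?thesis
    using assms by (simp add: sum_distrib_left)
qed

lemma quadratic_form_diag_minus_outer_nonneg:
  fixes r v :: "'d \<Rightarrow> real"
  assumes "finite F" "\<And>f. 0 \<le> r f" "(\<Sum>f\<in>F. r f) = 1"
  shows "0 \<le> (\<Sum>f\<in>F. v f * (r f * v f - r f * (\<Sum>g\<in>F. r g * v g)))"
proof -
  define m where "m = (\<Sum>g\<in>F. r g * v g)"
  have centered: "(\<Sum>f\<in>F. r f * (v f - m)) = 0"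
    using assms(3) by (simp add: right_diff_distrib sum_subtractf sum_distrib_right[symmetric] m_def)
  have "(\<Sum>f\<in>F. v f * (r f * v f - r f * m)) =
      (\<Sum>f\<in>F. r f * (v f - m)\<^sup>2) + m * (\<Sum>f\<in>F. r f * (v f - m))"
    by (simp add: power2_eq_square sum_distrib_left sum.distrib[symmetric] algebra_simps)
  also have "\<dots> \<ge> 0"
    unfolding centered using assms(2) by (simp add: sum_nonneg)
  finally show ?thesis
    unfolding m_def .
qed

lemma double_sum_diff_mult_diff:
  fixes a e d :: "'d \<Rightarrow> 'a::comm_ring_1"
  shows "(\<Sum>f\<in>F. \<Sum>g\<in>F. a f * a g * ((e f - e g) * (d f - d g))) =
    2 * ((\<Sum>g\<in>F. a g) * (\<Sum>f\<in>F. a f * e f * d f) - (\<Sum>f\<in>F. a f * e f) * (\<Sum>g\<in>F. a g * d g))"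
proof -
  have "(\<Sum>f\<in>F. \<Sum>g\<in>F. a f * a g * ((e f - e g) * (d f - d g))) =
     (\<Sum>f\<in>F. \<Sum>g\<in>F. a g * (a f * e f * d f)) - (\<Sum>f\<in>F. \<Sum>g\<in>F. a f * e f * (a g * d g))
     - (\<Sum>f\<in>F. \<Sum>g\<in>F. a g * e g * (a f * d f)) + (\<Sum>f\<in>F. \<Sum>g\<in>F. a f * (a g * e g * d g))"
    by (simp add: sum_subtractf[symmetric] sum.distrib[symmetric] algebra_simps)
  also have "\<dots> = 2 * ((\<Sum>g\<in>F. a g) * (\<Sum>f\<in>F. a f * e f * d f) - (\<Sum>f\<in>F. a f * e f) * (\<Sum>g\<in>F. a g * d g))"
    unfolding sum.swap[of "\<lambda>f g. a g * e g * (a f * d f)"] sum.swap[of "\<lambda>f g. a f * (a g * e g * d g)"]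
      sum_product by (simp add: algebra_simps)
  finally show ?thesis .
qed

lemma exp_share_shift_inner:
  assumes "finite F" "\<And>k. 0 \<le> b k" "0 < (\<Sum>k\<in>F. b k)"
  shows "(\<Sum>f\<in>F. d $ f * (exp_share F b (u + d) f - exp_share F b u f)) =
     (\<Sum>f\<in>F. \<Sum>g\<in>F. (exp (u $ f) * b f) * (exp (u $ g) * b g) *
        ((exp (d $ f) - exp (d $ g)) * (d $ f - d $ g))) / (2 * expsum F b u * expsum F b (u + d))"
proof -
  define a where "a k = exp (u $ k) * b k" for k
  define e where "e k = exp (d $ k)" for k
  have Z: "expsum F b u = (\<Sum>g\<in>F. a g)"
    unfolding expsum_def a_def ..
  have Z': "expsum F b (u + d) = (\<Sum>f\<in>F. a f * e f)"
    unfolding expsum_def a_def e_def by (simp add: exp_add mult_ac)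
  have "(\<Sum>f\<in>F. d $ f * (exp_share F b (u + d) f - exp_share F b u f)) =
     (\<Sum>f\<in>F. a f * e f * d $ f) / expsum F b (u + d) - (\<Sum>g\<in>F. a g * d $ g) / expsum F b u"
    unfolding exp_share_def a_def e_def
    by (simp add: sum_subtractf sum_divide_distrib right_diff_distrib exp_add mult_ac)
  also have "\<dots> = 2 * ((\<Sum>g\<in>F. a g) * (\<Sum>f\<in>F. a f * e f * d $ f) - (\<Sum>f\<in>F. a f * e f) * (\<Sum>g\<in>F. a g * d $ g))
      / (2 * expsum F b u * expsum F b (u + d))"
    using expsum_pos[OF assms, of u] expsum_pos[OF assms, of "u + d"]
    unfolding Z Z' by (simp add: field_simps)
  finally show ?thesis
    unfolding double_sum_diff_mult_diff[symmetric] a_def e_def .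
qed

lemma exp_diff_mult_diff_nonneg: "0 \<le> (exp s - exp t) * (s - t :: real)"
  by (cases "s \<le> t") (auto intro: mult_nonpos_nonpos mult_nonneg_nonneg)

lemma exp_share_monotone:
  assumes "finite F" "\<And>k. 0 \<le> b k" "0 < (\<Sum>k\<in>F. b k)"
  shows "0 \<le> (\<Sum>f\<in>F. d $ f * (exp_share F b (u + d) f - exp_share F b u f))"
  unfolding exp_share_shift_inner[OF assms]
  using expsum_pos[OF assms] assms(2)
  by (intro divide_nonneg_pos sum_nonneg exp_diff_mult_diff_nonneg mult_nonneg_nonneg) auto

lemma exp_share_shift_inner_eq_0_imp_eq:
  assumes "finite F" "\<And>k. 0 \<le> b k" "0 < (\<Sum>k\<in>F. b k)"
    and inner0: "(\<Sum>f\<in>F. d $ f * (exp_share F b (u + d) f - exp_share F b u f)) = 0"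
    and "f \<in> F" "g \<in> F" "0 < b f" "0 < b g"
  shows "d $ f = d $ g"
proof -
  define t where "t f g = (exp (u $ f) * b f) * (exp (u $ g) * b g) *
    ((exp (d $ f) - exp (d $ g)) * (d $ f - d $ g))" for f g
  have t_nonneg: "0 \<le> t f g" for f g
    unfolding t_def using assms(2) by (intro mult_nonneg_nonneg exp_diff_mult_diff_nonneg) auto
  have "(\<Sum>f\<in>F. \<Sum>g\<in>F. t f g) = 0"
    using inner0 expsum_pos[OF assms(1-3), of u] expsum_pos[OF assms(1-3), of "u + d"]
    unfolding exp_share_shift_inner[OF assms(1-3)] t_def by (simp add: mult.assoc)
  then have "t f g = 0"
    using assms(1,5,6) t_nonneg by (simp add: sum_nonneg_eq_0_iff sum_nonneg)
  then have "(exp (d $ f) - exp (d $ g)) * (d $ f - d $ g) = 0"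
    using assms(7,8) by (simp add: t_def)
  then show ?thesis by auto
qed

lemma exp_share_shift_const_on_support:
  assumes "finite F" "\<And>k. 0 \<le> b k" "0 < (\<Sum>k\<in>F. b k)"
    and const: "\<And>f g. f \<in> F \<Longrightarrow> g \<in> F \<Longrightarrow> 0 < b f \<Longrightarrow> 0 < b g \<Longrightarrow> d $ f = d $ g"
    and "f \<in> F"
  shows "exp_share F b (u + d) f = exp_share F b u f"
proof -
  obtain k where k: "k \<in> F" "0 < b k"
    using assms by (metis not_less sum_nonpos)
  have scale: "exp ((u + d) $ g) * b g = exp (d $ k) * (exp (u $ g) * b g)" if "g \<in> F" for g
    using const[OF that k(1) _ k(2)] assms(2)[of g] by (cases "b g = 0") (auto simp: exp_add)
  have "expsum F b (u + d) = exp (d $ k) * expsum F b u"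
    unfolding expsum_def sum_distrib_left by (rule sum.cong[OF refl scale])
  then have "exp_share F b (u + d) f = exp (d $ k) * (exp (u $ f) * b f) / (exp (d $ k) * expsum F b u)"
    unfolding exp_share_def by (simp only: scale[OF \<open>f \<in> F\<close>])
  then show ?thesis
    by (simp add: exp_share_def)
qed

lemma expectation_pmf_finite:
  fixes P :: "'a::finite pmf"
  shows "measure_pmf.expectation P g = (\<Sum>p\<in>set_pmf P. pmf P p * g p)"
  by (subst integral_measure_pmf_real[of "set_pmf P"]) (auto simp: mult.commute)

lemma bdiff_nonneg: "0 \<le> bdiff x p k"
  by (simp add: bdiff_def)

context
  fixes x :: "'i::finite \<Rightarrow> real^'d" and w :: "real^'d" and P :: "('i \<times> 'i) pmf"
begin

abbreviation F where "F \<equiv> Fstar x w P"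

lemma rho_eq_exp_share: "rho x w P u p f = exp_share F (bdiff x p) u f"
  unfolding rho_def exp_share_def expsum_def ..

lemma rho_nonneg: "0 \<le> rho x w P u p f"
  unfolding rho_eq_exp_share by (rule exp_share_nonneg[OF bdiff_nonneg])

lemma Phi_eq_sum: "Phi x w P u = (\<Sum>p\<in>set_pmf P. pmf P p * ln (expsum F (bdiff x p) u))"
  unfolding Phi_def expectation_pmf_finite expsum_def ..

lemma Infl_eq_sum: "Infl x w P u f = (\<Sum>p\<in>set_pmf P. pmf P p * rho x w P u p f)"
  unfolding Infl_def expectation_pmf_finite ..

lemma Jac_eq_sum: "Jac x w P u f g =
    (\<Sum>p\<in>set_pmf P. pmf P p * ((if f = g then rho x w P u p f else 0) - rho x w P u p f * rho x w P u p g))"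
  unfolding Jac_def expectation_pmf_finite ..

lemma Jac_offdiag:
  assumes "f \<noteq> g"
  shows "Jac x w P u f g = - measure_pmf.expectation P (\<lambda>p. rho x w P u p f * rho x w P u p g)"
  unfolding Jac_eq_sum expectation_pmf_finite using assms by (simp add: sum_negf[symmetric])

lemma Jac_offdiag_nonpos: "f \<noteq> g \<Longrightarrow> Jac x w P u f g \<le> 0"
  unfolding Jac_offdiag expectation_pmf_finite
  by (simp add: sum_nonneg rho_nonneg)

lemma Jac_sym: "Jac x w P u f g = Jac x w P u g f"
  unfolding Jac_eq_sum by (rule sum.cong) (auto simp: mult.commute)

lemma compete_edge_iff:
  "compete_edge x w P f g \<longleftrightarrow>
    f \<in> F \<and> g \<in> F \<and> f \<noteq> g \<and> (\<exists>p\<in>set_pmf P. 0 < bdiff x p f \<and> 0 < bdiff x p g)"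
proof -
  have "0 < measure_pmf.prob P A \<longleftrightarrow> set_pmf P \<inter> A \<noteq> {}" for A
    using measure_nonneg[of P A] by (simp add: less_le measure_pmf_zero_iff)
  moreover have "0 < bdiff x p f * bdiff x p g \<longleftrightarrow> 0 < bdiff x p f \<and> 0 < bdiff x p g" for p
    using bdiff_nonneg[of x p f] bdiff_nonneg[of x p g] by (auto simp: zero_less_mult_iff)
  ultimately show ?thesis
    unfolding compete_edge_def by auto
qed

lemma Jac_neq_0_imp_compete_edge:
  assumes "f \<in> F" "g \<in> F" "f \<noteq> g" "Jac x w P u f g \<noteq> 0"
  shows "compete_edge x w P f g"
proof -
  obtain p where "p \<in> set_pmf P" "rho x w P u p f * rho x w P u p g \<noteq> 0"
    using assms(3,4) unfolding Jac_offdiag[OF assms(3)] expectation_pmf_finite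
    by (metis (no_types, lifting) mult_zero_right neg_equal_0_iff_equal sum.neutral)
  then have "0 < bdiff x p f" "0 < bdiff x p g"
    using bdiff_nonneg[of x p f] bdiff_nonneg[of x p g] by (auto simp: rho_def less_le)
  with \<open>p \<in> set_pmf P\<close> show ?thesis
    using assms(1-3) by (auto simp: compete_edge_iff)
qed

lemma sum_Jac_mult:
  assumes "f \<in> F"
  shows "(\<Sum>g\<in>F. Jac x w P u f g * v g) =
    (\<Sum>p\<in>set_pmf P. pmf P p *
      (rho x w P u p f * v f - rho x w P u p f * (\<Sum>g\<in>F. rho x w P u p g * v g)))"
proof -
  have "(\<Sum>g\<in>F. Jac x w P u f g * v g) = (\<Sum>p\<in>set_pmf P. pmf P p *
      (\<Sum>g\<in>F. ((if f = g then rho x w P u p f else 0) - rho x w P u p f * rho x w P u p g) * v g))"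
    unfolding Jac_eq_sum by (simp add: sum_distrib_left sum_distrib_right mult_ac sum.swap[of _ "set_pmf P"])
  then show ?thesis
    by (simp add: sum_delta_minus_product[OF finite assms])
qed

lemma Infl_inner_eq_sum:
  "(\<Sum>f\<in>F. (u' - u) $ f * (Infl x w P u' f - Infl x w P u f)) =
    (\<Sum>p\<in>set_pmf P. pmf P p * (\<Sum>f\<in>F. (u' - u) $ f * (rho x w P u' p f - rho x w P u p f)))"
  unfolding Infl_eq_sum
  by (simp add: sum_subtractf[symmetric] right_diff_distrib[symmetric] sum_distrib_left
      sum_distrib_right mult_ac sum.swap[of _ "set_pmf P"])

context
  assumes supp: "\<forall>p\<in>set_pmf P. (\<Sum>k\<in>F. bdiff x p k) > 0"
begin

lemma active_sum_pos: "p \<in> set_pmf P \<Longrightarrow> 0 < (\<Sum>k\<in>F. bdiff x p k)"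
  using supp by blast

lemma sum_rho: "p \<in> set_pmf P \<Longrightarrow> (\<Sum>f\<in>F. rho x w P u p f) = 1"
  unfolding rho_eq_exp_share by (rule sum_exp_share[OF finite bdiff_nonneg active_sum_pos])

lemma has_derivative_Phi:
  "(Phi x w P has_derivative (\<lambda>h. \<Sum>f\<in>F. Infl x w P u f * h $ f)) (at u)"
proof -
  have "((\<lambda>u. \<Sum>p\<in>set_pmf P. pmf P p * ln (expsum F (bdiff x p) u)) has_derivative
      (\<lambda>h. \<Sum>p\<in>set_pmf P. pmf P p * (\<Sum>f\<in>F. rho x w P u p f * h $ f))) (at u)"
    unfolding rho_eq_exp_share
    by (intro has_derivative_sum has_derivative_mult_right
        has_derivative_ln_expsum[OF finite bdiff_nonneg active_sum_pos])
  then show ?thesis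
    unfolding Phi_eq_sum[abs_def] Infl_eq_sum
    by (rule has_derivative_eq_rhs)
      (simp add: fun_eq_iff sum_distrib_left sum_distrib_right mult_ac sum.swap[of _ "set_pmf P"])
qed

lemma has_derivative_rho:
  assumes "p \<in> set_pmf P"
  shows "((\<lambda>v. rho x w P v p f) has_derivative (\<lambda>h. rho x w P u p f * h $ f -
      rho x w P u p f * (\<Sum>g\<in>F. rho x w P u p g * h $ g))) (at u)"
  unfolding rho_eq_exp_share
  by (rule has_derivative_exp_share[OF finite bdiff_nonneg active_sum_pos[OF assms]])

lemma has_derivative_Infl:
  assumes "f \<in> F"
  shows "((\<lambda>v. Infl x w P v f) has_derivative (\<lambda>h. \<Sum>g\<in>F. Jac x w P u f g * h $ g)) (at u)"
  unfolding Infl_eq_sum sum_Jac_mult[OF assms]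
  by (intro has_derivative_sum has_derivative_mult_right has_derivative_rho)

lemma Jac_diag:
  assumes "f \<in> F"
  shows "Jac x w P u f f =
    (\<Sum>g\<in>F - {f}. measure_pmf.expectation P (\<lambda>p. rho x w P u p f * rho x w P u p g))"
proof -
  have others: "(\<Sum>g\<in>F - {f}. rho x w P u p g) = 1 - rho x w P u p f" if "p \<in> set_pmf P" for p
    using sum_rho[OF that, of u] sum.remove[OF finite assms, of "rho x w P u p"] by simp
  have "(\<Sum>g\<in>F - {f}. measure_pmf.expectation P (\<lambda>p. rho x w P u p f * rho x w P u p g)) =
      (\<Sum>p\<in>set_pmf P. pmf P p * (rho x w P u p f * (\<Sum>g\<in>F - {f}. rho x w P u p g)))"
    unfolding expectation_pmf_finite by (simp add: sum_distrib_left sum.swap[of _ "set_pmf P"])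
  also have "\<dots> = (\<Sum>p\<in>set_pmf P. pmf P p * (rho x w P u p f - rho x w P u p f * rho x w P u p f))"
    by (intro sum.cong refl) (simp add: others right_diff_distrib)
  finally show ?thesis
    unfolding Jac_eq_sum by simp
qed

lemma Jac_row_sum: "f \<in> F \<Longrightarrow> (\<Sum>g\<in>F. Jac x w P u f g) = 0"
  using sum_Jac_mult[of f u "\<lambda>_. 1"] by (simp add: sum_rho)

lemma Jac_quadratic_form_nonneg: "0 \<le> (\<Sum>f\<in>F. \<Sum>g\<in>F. v f * Jac x w P u f g * v g)"
proof -
  have "(\<Sum>f\<in>F. \<Sum>g\<in>F. v f * Jac x w P u f g * v g) = (\<Sum>f\<in>F. v f * (\<Sum>g\<in>F. Jac x w P u f g * v g))"
    by (simp add: sum_distrib_left mult.assoc)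
  also have "\<dots> = (\<Sum>f\<in>F. \<Sum>p\<in>set_pmf P. pmf P p * (v f *
      (rho x w P u p f * v f - rho x w P u p f * (\<Sum>g\<in>F. rho x w P u p g * v g))))"
    by (intro sum.cong refl) (simp only: sum_Jac_mult, simp add: sum_distrib_left mult_ac)
  also have "\<dots> = (\<Sum>p\<in>set_pmf P. pmf P p * (\<Sum>f\<in>F. v f *
      (rho x w P u p f * v f - rho x w P u p f * (\<Sum>g\<in>F. rho x w P u p g * v g))))"
    by (subst sum.swap) (simp only: sum_distrib_left)
  also have "\<dots> \<ge> 0"
    by (intro sum_nonneg mult_nonneg_nonneg pmf_nonneg quadratic_form_diag_minus_outer_nonneg[OF finite]
        rho_nonneg sum_rho)
  finally show ?thesis .
qed

lemma has_integral_Jac_quadratic_form: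
  "((\<lambda>t. \<Sum>f\<in>F. \<Sum>g\<in>F. (u' - u) $ f * Jac x w P (u + t *\<^sub>R (u' - u)) f g * (u' - u) $ g)
     has_integral (\<Sum>f\<in>F. (u' - u) $ f * (Infl x w P u' f - Infl x w P u f))) {0..1}"
proof -
  define d where "d = u' - u"
  define H where "H t = (\<Sum>f\<in>F. d $ f * Infl x w P (u + t *\<^sub>R d) f)" for t
  have "(H has_vector_derivative (\<Sum>f\<in>F. \<Sum>g\<in>F. d $ f * Jac x w P (u + t *\<^sub>R d) f g * d $ g)) (at t)"
    for t
  proof -
    have "((\<lambda>t. u + t *\<^sub>R d) has_derivative (\<lambda>s. s *\<^sub>R d)) (at t)"
      by (auto intro!: derivative_eq_intros)
    from has_derivative_compose[OF this has_derivative_Infl]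
    have "(H has_derivative (\<lambda>s. \<Sum>f\<in>F. d $ f *
        (\<Sum>g\<in>F. Jac x w P (u + t *\<^sub>R d) f g * (s *\<^sub>R d) $ g))) (at t)"
      unfolding H_def[abs_def] by (intro has_derivative_sum has_derivative_mult_right)
    then show ?thesis
      unfolding has_vector_derivative_def
      by (rule has_derivative_eq_rhs) (simp add: fun_eq_iff sum_distrib_left mult_ac)
  qed
  then have "((\<lambda>t. \<Sum>f\<in>F. \<Sum>g\<in>F. d $ f * Jac x w P (u + t *\<^sub>R d) f g * d $ g) has_integral H 1 - H 0) {0..1}"
    by (intro fundamental_theorem_of_calculus) (auto intro: has_vector_derivative_at_within)
  moreover have "H 1 - H 0 = (\<Sum>f\<in>F. d $ f * (Infl x w P u' f - Infl x w P u f))"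
    unfolding H_def d_def by (simp add: sum_subtractf right_diff_distrib)
  ultimately show ?thesis
    unfolding d_def by simp
qed

lemma Infl_monotone: "0 \<le> (\<Sum>f\<in>F. (u' - u) $ f * (Infl x w P u' f - Infl x w P u f))"
  using Jac_quadratic_form_nonneg[of "\<lambda>f. (u' - u) $ f"]
  by (intro has_integral_nonneg[OF has_integral_Jac_quadratic_form]) simp

lemma rho_monotone:
  assumes "p \<in> set_pmf P"
  shows "0 \<le> (\<Sum>f\<in>F. (u' - u) $ f * (rho x w P u' p f - rho x w P u p f))"
  using exp_share_monotone[OF finite bdiff_nonneg active_sum_pos[OF assms], of "u' - u" u]
  by (simp add: rho_eq_exp_share)

lemma Infl_eq_imp_compete_edge_const:
  assumes Infl_eq: "\<forall>f\<in>F. Infl x w P u' f = Infl x w P u f" and "compete_edge x w P f g"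
  shows "(u' - u) $ f = (u' - u) $ g"
proof -
  define q where "q p = (\<Sum>f\<in>F. (u' - u) $ f * (rho x w P u' p f - rho x w P u p f))" for p
  have q_nonneg: "0 \<le> pmf P p * q p" if "p \<in> set_pmf P" for p
    unfolding q_def using rho_monotone[OF that] by simp
  have "(\<Sum>p\<in>set_pmf P. pmf P p * q p) = 0"
    using Infl_eq Infl_inner_eq_sum[of u' u] unfolding q_def by simp
  then have "pmf P p * q p = 0" if "p \<in> set_pmf P" for p
    using that q_nonneg by (simp add: sum_nonneg_eq_0_iff)
  then have q0: "q p = 0" if "p \<in> set_pmf P" for p
    using that by (simp add: set_pmf_iff)
  obtain p where "p \<in> set_pmf P" "f \<in> F" "g \<in> F" "0 < bdiff x p f" "0 < bdiff x p g"
    using assms(2) unfolding compete_edge_iff by blast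
  then show ?thesis
    using exp_share_shift_inner_eq_0_imp_eq[OF finite bdiff_nonneg active_sum_pos, of p "u' - u" u f g]
      q0[of p] by (simp add: q_def rho_eq_exp_share)
qed

lemma Infl_eq_iff_same_comp_const:
  "(\<forall>f\<in>F. Infl x w P u' f = Infl x w P u f) \<longleftrightarrow>
    (\<forall>f\<in>F. \<forall>g\<in>F. same_comp x w P f g \<longrightarrow> (u' - u) $ f = (u' - u) $ g)"
proof
  assume Infl_eq: "\<forall>f\<in>F. Infl x w P u' f = Infl x w P u f"
  have "(u' - u) $ f = (u' - u) $ g" if "same_comp x w P f g" for f g
    using that unfolding same_comp_def
    by (induction rule: rtranclp_induct) (auto dest: Infl_eq_imp_compete_edge_const[OF Infl_eq])
  then show "\<forall>f\<in>F. \<forall>g\<in>F. same_comp x w P f g \<longrightarrow> (u' - u) $ f = (u' - u) $ g"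
    by blast
next
  assume const: "\<forall>f\<in>F. \<forall>g\<in>F. same_comp x w P f g \<longrightarrow> (u' - u) $ f = (u' - u) $ g"
  have "rho x w P u' p f = rho x w P u p f" if p: "p \<in> set_pmf P" and "f \<in> F" for p f
  proof -
    have "(u' - u) $ f = (u' - u) $ g"
      if "f \<in> F" "g \<in> F" "0 < bdiff x p f" "0 < bdiff x p g" for f g
    proof (cases "f = g")
      case False
      with that p have "same_comp x w P f g"
        unfolding same_comp_def compete_edge_iff by blast
      with const that show ?thesis by blast
    qed simp
    from exp_share_shift_const_on_support[OF finite bdiff_nonneg active_sum_pos[OF p] this \<open>f \<in> F\<close>, of u]
    show ?thesis
      by (simp add: rho_eq_exp_share)
  qed
  then show "\<forall>f\<in>F. Infl x w P u' f = Infl x w P u f"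
    unfolding Infl_eq_sum by simp
qed

lemma Infl_eq_iff_shift_const:
  assumes "\<forall>f\<in>F. \<forall>g\<in>F. same_comp x w P f g"
  shows "(\<forall>f\<in>F. Infl x w P u' f = Infl x w P u f) \<longleftrightarrow> (\<exists>c. \<forall>f\<in>F. u' $ f = u $ f + c)"
proof -
  have "(\<forall>f\<in>F. Infl x w P u' f = Infl x w P u f) \<longleftrightarrow> (\<forall>f\<in>F. \<forall>g\<in>F. (u' - u) $ f = (u' - u) $ g)"
    unfolding Infl_eq_iff_same_comp_const using assms by blast
  also have "\<dots> \<longleftrightarrow> (\<exists>c. \<forall>f\<in>F. u' $ f = u $ f + c)"
  proof
    assume const: "\<forall>f\<in>F. \<forall>g\<in>F. (u' - u) $ f = (u' - u) $ g"
    show "\<exists>c. \<forall>f\<in>F. u' $ f = u $ f + c"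
    proof (cases "F = {}")
      case False
      then obtain f0 where "f0 \<in> F"
        by blast
      with const have "\<forall>f\<in>F. u' $ f = u $ f + (u' - u) $ f0"
        by (metis add_diff_cancel_left' diff_add_cancel vector_minus_component)
      then show ?thesis ..
    qed simp
  qed auto
  finally show ?thesis .
qed

end

end

theorem theorem4p6:
  fixes x :: "'i::finite \<Rightarrow> real^'d" and w :: "real^'d" and P :: "('i \<times> 'i) pmf"
  assumes supp: "\<forall>p\<in>set_pmf P. (\<Sum>k\<in>Fstar x w P. bdiff x p k) > 0"
  shows
   "(\<forall>u. (Phi x w P has_derivative (\<lambda>h. \<Sum>f\<in>Fstar x w P. Infl x w P u f * h $ f)) (at u))
    \<and> (\<forall>u.
        (\<forall>f\<in>Fstar x w P. ((\<lambda>v. Infl x w P v f) has_derivative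
              (\<lambda>h. \<Sum>g\<in>Fstar x w P. Jac x w P u f g * h $ g)) (at u))
      \<and> (\<forall>f\<in>Fstar x w P. \<forall>g\<in>Fstar x w P. f \<noteq> g \<longrightarrow>
              Jac x w P u f g = - measure_pmf.expectation P (\<lambda>p. rho x w P u p f * rho x w P u p g)
            \<and> Jac x w P u f g \<le> 0)
      \<and> (\<forall>f\<in>Fstar x w P. Jac x w P u f f =
              (\<Sum>g\<in>Fstar x w P - {f}. measure_pmf.expectation P (\<lambda>p. rho x w P u p f * rho x w P u p g)))
      \<and> (\<forall>f\<in>Fstar x w P. \<forall>g\<in>Fstar x w P. Jac x w P u f g = Jac x w P u g f)
      \<and> (\<forall>v :: 'd \<Rightarrow> real. 0 \<le> (\<Sum>f\<in>Fstar x w P. \<Sum>g\<in>Fstar x w P. v f * Jac x w P u f g * v g))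
      \<and> (\<forall>f\<in>Fstar x w P. (\<Sum>g\<in>Fstar x w P. Jac x w P u f g) = 0)
      \<and> (\<forall>f\<in>Fstar x w P. \<forall>g\<in>Fstar x w P. f \<noteq> g \<and> Jac x w P u f g \<noteq> 0 \<longrightarrow> compete_edge x w P f g))
    \<and> (\<forall>u u'.
        ((\<lambda>t. \<Sum>f\<in>Fstar x w P. \<Sum>g\<in>Fstar x w P.
              (u' - u) $ f * Jac x w P (u + t *\<^sub>R (u' - u)) f g * (u' - u) $ g)
          has_integral (\<Sum>f\<in>Fstar x w P. (u' - u) $ f * (Infl x w P u' f - Infl x w P u f))) {0..1}
      \<and> 0 \<le> (\<Sum>f\<in>Fstar x w P. (u' - u) $ f * (Infl x w P u' f - Infl x w P u f)))
    \<and> (\<forall>u u'. (\<forall>f\<in>Fstar x w P. Infl x w P u' f = Infl x w P u f) \<longleftrightarrow>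
        (\<forall>f\<in>Fstar x w P. \<forall>g\<in>Fstar x w P. same_comp x w P f g \<longrightarrow> (u' - u) $ f = (u' - u) $ g))
    \<and> ((\<forall>f\<in>Fstar x w P. \<forall>g\<in>Fstar x w P. same_comp x w P f g) \<longrightarrow>
        (\<forall>u u'. (\<forall>f\<in>Fstar x w P. Infl x w P u' f = Infl x w P u f) \<longleftrightarrow>
          (\<exists>c. \<forall>f\<in>Fstar x w P. u' $ f = u $ f + c)))"
  by (intro conjI allI ballI impI)
    (blast intro: has_derivative_Phi[OF supp] has_derivative_Infl[OF supp] Jac_offdiag
      Jac_offdiag_nonpos Jac_diag[OF supp] Jac_sym Jac_quadratic_form_nonneg[OF supp]
      Jac_row_sum[OF supp] Jac_neq_0_imp_compete_edge has_integral_Jac_quadratic_form[OF supp]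
      Infl_monotone[OF supp]
     | rule Infl_eq_iff_same_comp_const[OF supp] Infl_eq_iff_shift_const[OF supp])+

end
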